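(* (Soundness of $\mathsf{GT}$.) For all finite multisets of formulas $\Gamma,\Delta$ of $\mathbf{PL}(\mathbin{\backslash\!\!/})$: if $\vdash_{\mathsf{GT}}\Gamma\Rightarrow\Delta$, then $\Gamma\models\bigvee\Delta$.
   Context: Fix a countably infinite set $\mathsf{Prop}$ of propositional variables. Classical formulas are generated by $\alpha ::= p \mid \bot \mid \neg\alpha \mid \alpha\wedge\alpha \mid \alpha\vee\alpha$ with $p\in\mathsf{Prop}$. Formulas of basic propositional team logic $\mathbf{PL}(\mathbin{\backslash\!\!/})$ are generated by $\phi ::= \alpha \mid \phi\wedge\phi \mid \phi\vee\phi \mid \phi\mathbin{\backslash\!\!/}\phi$ where $\alpha$ is classical (so negation is applied only to classical formulas); $\vee$ is the split disjunction and $\mathbin{\backslash\!\!/}$ the inquisitive disjunction. A team with domain $X\subseteq\mathsf{Prop}$ is a set $t\subseteq 2^X$ of valuations. For a team $t$ whose domain contains the variables of the formula: $t\models p$ iff $v(p)=1$ for all $v\in t$; $t\models\bot$ iff $t=\emptyset$; $t\models\neg\alpha$ iff $\{v\}\not\models\alpha$ for all $v\in t$; $t\models\phi\wedge\psi$ iff $t\models\phi$ and $t\models\psi$; $t\models\phi\vee\psi$ iff there are $s,u\subseteq t$ with $t=s\cup u$, $s\models\phi$, $u\models\psi$; $t\models\phi\mathbin{\backslash\!\!/}\psi$ iff $t\models\phi$ or $t\models\psi$. For a multiset $\Gamma$, $\Gamma\models\phi$ means every team satisfying all members of $\Gamma$ satisfies $\phi$. Conventions: $\bigvee\emptyset:=\bot$,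 $\bigwedge\emptyset:=\neg\bot$. A sequent is $\Gamma\Rightarrow\Delta$ with $\Gamma,\Delta$ finite multisets of formulas; "$\Gamma,\Delta$" denotes multiset union. Deep-inference notation: for a formula $\chi$ with a designated occurrence of a subformula that does not lie in the scope of any negation, $\chi\{\eta\}$ denotes the result of replacing that occurrence by $\eta$. The calculus $\mathsf{GT}$ (below $\alpha$ ranges over classical formulas, $\Lambda$ over multisets of classical formulas, everything else arbitrary): axioms $\Gamma,p\Rightarrow p,\Delta$ and $\Gamma,\bot\Rightarrow\Delta$; rules: (L$\neg$) from $\Gamma\Rightarrow\alpha,\Delta$ infer $\Gamma,\neg\alpha\Rightarrow\Delta$; (R$\neg$) from $\Gamma,\alpha\Rightarrow\Delta$ infer $\Gamma\Rightarrow\neg\alpha,\Delta$; (L$\wedge$) from $\Gamma,\phi,\psi\Rightarrow\Delta$ infer $\Gamma,\phi\wedge\psi\Rightarrow\Delta$; (R$\wedge$) from $\Gamma\Rightarrow\phi,\Lambda$ and $\Gamma\Rightarrow\psi,\Lambda$ infer $\Gamma\Rightarrow\phi\wedge\psi,\Lambda,\Delta$; (L$\vee$) from $\Gamma,\phi\Rightarrow\Lambda$ and $\Gamma,\psi\Rightarrow\Lambda$ infer $\Gamma,\phi\vee\psi\Rightarrow\Lambda,\Delta$; (R$\vee$) from $\Gamma\Rightarrow\phi,\psi,\Delta$ infer $\Gamma\Rightarrow\phi\vee\psi,\Delta$; (L$\mathbin{\backslash\!\!/}$) from $\Gamma,\chi\{\phi_L\}\Rightarrow\Delta$ and $\Gamma,\chi\{\phi_R\}\Rightarrow\Delta$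 infer $\Gamma,\chi\{\phi_L\mathbin{\backslash\!\!/}\phi_R\}\Rightarrow\Delta$; (R$\mathbin{\backslash\!\!/}$) from $\Gamma\Rightarrow\chi\{\phi_i\},\Delta$ ($i\in\{L,R\}$) infer $\Gamma\Rightarrow\chi\{\phi_L\mathbin{\backslash\!\!/}\phi_R\},\Delta$; (Cut) from $\Gamma\Rightarrow\phi,\Delta$ and $\Pi,\phi\Rightarrow\Sigma$ infer $\Pi,\Gamma\Rightarrow\Delta,\Sigma$. $\vdash_{\mathsf{GT}}$ denotes derivability in $\mathsf{GT}$. *)

theory Defs
  imports Main "HOL-Library.Multiset"
begin

text \<open>One datatype for all formulas; the predicates classical and wf single out
  classical formulas and formulas of PL(inquisitive disjunction)
  (negation only applied to classical formulas).\<close>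

datatype fml =
    Var nat
  | Bot
  | Neg fml
  | Conj fml fml
  | Disj fml fml
  | IDisj fml fml

fun classical :: "fml \<Rightarrow> bool" where
  "classical (Var p) = True"
| "classical Bot = True"
| "classical (Neg a) = classical a"
| "classical (Conj a b) = (classical a \<and> classical b)"
| "classical (Disj a b) = (classical a \<and> classical b)"
| "classical (IDisj a b) = False"

fun wf :: "fml \<Rightarrow> bool" where
  "wf (Var p) = True"
| "wf Bot = True"
| "wf (Neg a) = classical a"
| "wf (Conj a b) = (wf a \<and> wf b)"
| "wf (Disj a b) = (wf a \<and> wf b)"
| "wf (IDisj a b) = (wf a \<and> wf b)"

definition wfs :: "fml multiset \<Rightarrow> bool" where
  "wfs M = (\<forall>\<phi>\<in>#M. wf \<phi>)"

definition classicals :: "fml multiset \<Rightarrow> bool" where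
  "classicals M = (\<forall>\<phi>\<in>#M. classical \<phi>)"

fun vars :: "fml \<Rightarrow> nat set" where
  "vars (Var p) = {p}"
| "vars Bot = {}"
| "vars (Neg a) = vars a"
| "vars (Conj a b) = vars a \<union> vars b"
| "vars (Disj a b) = vars a \<union> vars b"
| "vars (IDisj a b) = vars a \<union> vars b"

text \<open>Deep-inference contexts: a formula with one designated hole that is not
  in the scope of any negation.\<close>

datatype ctx =
    Hole
  | CConjL ctx fml | CConjR fml ctx
  | CDisjL ctx fml | CDisjR fml ctx
  | CIDisjL ctx fml | CIDisjR fml ctx

fun fill :: "ctx \<Rightarrow> fml \<Rightarrow> fml" where
  "fill Hole e = e"
| "fill (CConjL c b) e = Conj (fill c e) b"
| "fill (CConjR a c) e = Conj a (fill c e)"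
| "fill (CDisjL c b) e = Disj (fill c e) b"
| "fill (CDisjR a c) e = Disj a (fill c e)"
| "fill (CIDisjL c b) e = IDisj (fill c e) b"
| "fill (CIDisjR a c) e = IDisj a (fill c e)"

text \<open>Big split disjunction of a multiset: for a list,
  [] gives Bot, [a] gives a, a # as gives Disj a (bigdisj as); for a multiset
  we take some enumeration (the choice is irrelevant semantically).\<close>

fun bigdisj_list :: "fml list \<Rightarrow> fml" where
  "bigdisj_list [] = Bot"
| "bigdisj_list [a] = a"
| "bigdisj_list (a # as) = Disj a (bigdisj_list as)"

definition bigdisj :: "fml multiset \<Rightarrow> fml" where
  "bigdisj M = bigdisj_list (SOME xs. mset xs = M)"

text \<open>A valuation with domain X is represented by a function nat \<Rightarrow> bool that is
  False outside X; a team with domain X is a set of such functions.\<close>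

definition team_on :: "nat set \<Rightarrow> (nat \<Rightarrow> bool) set \<Rightarrow> bool" where
  "team_on X t = (\<forall>v\<in>t. \<forall>x. x \<notin> X \<longrightarrow> \<not> v x)"

fun sat :: "(nat \<Rightarrow> bool) set \<Rightarrow> fml \<Rightarrow> bool" where
  "sat t (Var p) = (\<forall>v\<in>t. v p)"
| "sat t Bot = (t = {})"
| "sat t (Neg a) = (\<forall>v\<in>t. \<not> sat {v} a)"
| "sat t (Conj a b) = (sat t a \<and> sat t b)"
| "sat t (Disj a b) = (\<exists>s u. s \<subseteq> t \<and> u \<subseteq> t \<and> t = s \<union> u \<and> sat s a \<and> sat u b)"
| "sat t (IDisj a b) = (sat t a \<or> sat t b)"

definition entails :: "fml multiset \<Rightarrow> fml \<Rightarrow> bool" where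
  "entails \<Gamma> \<phi> = (\<forall>X t. (\<Union>\<gamma>\<in>set_mset \<Gamma>. vars \<gamma>) \<union> vars \<phi> \<subseteq> X \<longrightarrow> team_on X t \<longrightarrow>
                       (\<forall>\<gamma>\<in>#\<Gamma>. sat t \<gamma>) \<longrightarrow> sat t \<phi>)"

text \<open>Side
  conditions wfs/wf ensure that only formulas of PL(inquisitive disjunction)
  occur in derivations.\<close>

inductive derivable :: "fml multiset \<Rightarrow> fml multiset \<Rightarrow> bool" where
  Ax: "wfs \<Gamma> \<Longrightarrow> wfs \<Delta> \<Longrightarrow> derivable (add_mset (Var p) \<Gamma>) (add_mset (Var p) \<Delta>)"
| AxBot: "wfs \<Gamma> \<Longrightarrow> wfs \<Delta> \<Longrightarrow> derivable (add_mset Bot \<Gamma>) \<Delta>"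
| LNeg: "classical a \<Longrightarrow> derivable \<Gamma> (add_mset a \<Delta>) \<Longrightarrow> derivable (add_mset (Neg a) \<Gamma>) \<Delta>"
| RNeg: "classical a \<Longrightarrow> derivable (add_mset a \<Gamma>) \<Delta> \<Longrightarrow> derivable \<Gamma> (add_mset (Neg a) \<Delta>)"
| LConj: "derivable (add_mset \<phi> (add_mset \<psi> \<Gamma>)) \<Delta> \<Longrightarrow> derivable (add_mset (Conj \<phi> \<psi>) \<Gamma>) \<Delta>"
| RConj: "classicals \<Lambda> \<Longrightarrow> wfs \<Delta> \<Longrightarrow> derivable \<Gamma> (add_mset \<phi> \<Lambda>) \<Longrightarrow>
          derivable \<Gamma> (add_mset \<psi> \<Lambda>) \<Longrightarrow> derivable \<Gamma> (add_mset (Conj \<phi> \<psi>) (\<Lambda> + \<Delta>))"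
| LDisj: "classicals \<Lambda> \<Longrightarrow> wfs \<Delta> \<Longrightarrow> derivable (add_mset \<phi> \<Gamma>) \<Lambda> \<Longrightarrow>
          derivable (add_mset \<psi> \<Gamma>) \<Lambda> \<Longrightarrow> derivable (add_mset (Disj \<phi> \<psi>) \<Gamma>) (\<Lambda> + \<Delta>)"
| RDisj: "derivable \<Gamma> (add_mset \<phi> (add_mset \<psi> \<Delta>)) \<Longrightarrow> derivable \<Gamma> (add_mset (Disj \<phi> \<psi>) \<Delta>)"
| LIDisj: "derivable (add_mset (fill c \<phi>L) \<Gamma>) \<Delta> \<Longrightarrow> derivable (add_mset (fill c \<phi>R) \<Gamma>) \<Delta> \<Longrightarrow>
           derivable (add_mset (fill c (IDisj \<phi>L \<phi>R)) \<Gamma>) \<Delta>"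
| RIDisjL: "wf \<phi>R \<Longrightarrow> derivable \<Gamma> (add_mset (fill c \<phi>L) \<Delta>) \<Longrightarrow>
            derivable \<Gamma> (add_mset (fill c (IDisj \<phi>L \<phi>R)) \<Delta>)"
| RIDisjR: "wf \<phi>L \<Longrightarrow> derivable \<Gamma> (add_mset (fill c \<phi>R) \<Delta>) \<Longrightarrow>
            derivable \<Gamma> (add_mset (fill c (IDisj \<phi>L \<phi>R)) \<Delta>)"
| Cut: "derivable \<Gamma> (add_mset \<phi> \<Delta>) \<Longrightarrow> derivable (add_mset \<phi> \<Pi>) \<Sigma> \<Longrightarrow>
        derivable (\<Pi> + \<Gamma>) (\<Delta> + \<Sigma>)"

end

theory Submission
  imports Defs
begin

text \<open>A sequent \<open>\<Gamma> \<Rightarrow> \<Delta>\<close> is read as: every team satisfying \<open>\<Gamma>\<close> splits into subteams,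
  one for each member of \<open>\<Delta>\<close>, each satisfying its formula. Soundness of every rule then rests
  on three facts about team semantics: the empty team satisfies every formula, satisfaction is
  closed under subteams, and classical formulas are flat (satisfied by a team iff by each of
  its singletons). Flatness is what the side conditions of (R\<and>) and (L\<or>) buy: it makes the
  classical context \<open>\<Lambda>\<close> closed under unions, and it lets one carve out, pointwise, one common
  \<open>\<Lambda>\<close>-part for both premises of (R\<and>).\<close>

definition split_disj :: "('a set \<Rightarrow> bool) \<Rightarrow> ('a set \<Rightarrow> bool) \<Rightarrow> 'a set \<Rightarrow> bool" where
  "split_disj P Q t \<longleftrightarrow> (\<exists>s u. t = s \<union> u \<and> P s \<and> Q u)"

definition downward_closed :: "('a set \<Rightarrow> bool) \<Rightarrow> bool" where
  "downward_closed P \<longleftrightarrow> (\<forall>t s. P t \<longrightarrow> s \<subseteq> t \<longrightarrow> P s)"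

definition is_flat :: "('a set \<Rightarrow> bool) \<Rightarrow> bool" where
  "is_flat P \<longleftrightarrow> (\<forall>t. P t \<longleftrightarrow> (\<forall>v\<in>t. P {v}))"

lemma split_disjI: "t = s \<union> u \<Longrightarrow> P s \<Longrightarrow> Q u \<Longrightarrow> split_disj P Q t"
  unfolding split_disj_def by blast

lemma split_disjE:
  assumes "split_disj P Q t"
  obtains s u where "t = s \<union> u" "P s" "Q u"
  using assms unfolding split_disj_def by blast

lemma split_disj_empty_left: "split_disj (\<lambda>t. t = {}) P = P"
  by (auto simp: split_disj_def fun_eq_iff)

lemma split_disj_commute: "split_disj P Q = split_disj Q P"
  unfolding split_disj_def by (metis sup_commute)

lemma split_disj_assoc: "split_disj (split_disj P Q) R = split_disj P (split_disj Q R)"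
proof (intro ext iffI)
  fix t assume "split_disj (split_disj P Q) R t"
  then obtain s1 s2 u where "t = s1 \<union> (s2 \<union> u)" "P s1" "Q s2" "R u"
    unfolding split_disj_def by (auto simp: sup_assoc)
  then show "split_disj P (split_disj Q R) t"
    unfolding split_disj_def by blast
next
  fix t assume "split_disj P (split_disj Q R) t"
  then obtain s1 s2 u where "t = (s1 \<union> s2) \<union> u" "P s1" "Q s2" "R u"
    unfolding split_disj_def by (auto simp: sup_assoc)
  then show "split_disj (split_disj P Q) R t"
    unfolding split_disj_def by blast
qed

lemma split_disj_left_commute: "split_disj P (split_disj Q R) = split_disj Q (split_disj P R)"
  by (metis split_disj_assoc split_disj_commute)

lemma split_disj_mono:
  "split_disj P Q t \<Longrightarrow> (\<And>s. P s \<Longrightarrow> P' s) \<Longrightarrow> (\<And>u. Q u \<Longrightarrow> Q' u) \<Longrightarrow> split_disj P' Q' t"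
  unfolding split_disj_def by blast

lemma split_disj_disj_left:
  "split_disj (\<lambda>s. P s \<or> P' s) Q t \<longleftrightarrow> split_disj P Q t \<or> split_disj P' Q t"
  unfolding split_disj_def by blast

lemma split_disj_disj_right:
  "split_disj P (\<lambda>u. Q u \<or> Q' u) t \<longleftrightarrow> split_disj P Q t \<or> split_disj P Q' t"
  unfolding split_disj_def by blast

lemma downward_closedD: "downward_closed P \<Longrightarrow> P t \<Longrightarrow> s \<subseteq> t \<Longrightarrow> P s"
  unfolding downward_closed_def by blast

lemma downward_closed_split_disj:
  assumes "downward_closed P" and "downward_closed Q"
  shows "downward_closed (split_disj P Q)"
  unfolding downward_closed_def
proof (intro allI impI)
  fix t s assume "split_disj P Q t" and "s \<subseteq> t"
  then obtain t1 t2 where "t = t1 \<union> t2" "P t1" "Q t2"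
    unfolding split_disj_def by blast
  then have "s = (s \<inter> t1) \<union> (s \<inter> t2)" "P (s \<inter> t1)" "Q (s \<inter> t2)"
    using \<open>s \<subseteq> t\<close> assms by (auto intro: downward_closedD)
  then show "split_disj P Q s"
    unfolding split_disj_def by blast
qed

lemma is_flat_downward_closed: "is_flat P \<Longrightarrow> downward_closed P"
  unfolding is_flat_def downward_closed_def by blast

lemma is_flat_Un: "is_flat P \<Longrightarrow> P s \<Longrightarrow> P u \<Longrightarrow> P (s \<union> u)"
  unfolding is_flat_def by blast

lemma is_flat_conj: "is_flat P \<Longrightarrow> is_flat Q \<Longrightarrow> is_flat (\<lambda>t. P t \<and> Q t)"
  unfolding is_flat_def by blast

lemma is_flat_iff: "is_flat P \<Longrightarrow> P t \<longleftrightarrow> (\<forall>v\<in>t. P {v})"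
  unfolding is_flat_def by (rule spec)

lemma is_flat_split_disj:
  assumes P: "is_flat P" and Q: "is_flat Q"
  shows "is_flat (split_disj P Q)"
  unfolding is_flat_def
proof (intro allI iffI ballI)
  fix t v assume "split_disj P Q t" "v \<in> t"
  have "downward_closed (split_disj P Q)"
    using P Q by (simp add: downward_closed_split_disj is_flat_downward_closed)
  then show "split_disj P Q {v}"
    using \<open>split_disj P Q t\<close> by (rule downward_closedD) (simp add: \<open>v \<in> t\<close>)
next
  fix t assume split_points: "\<forall>v\<in>t. split_disj P Q {v}"
  have "P {v} \<or> Q {v}" if "v \<in> t" for v
  proof -
    have "split_disj P Q {v}"
      using split_points \<open>v \<in> t\<close> ..
    then obtain s u where "{v} = s \<union> u" "P s" "Q u"
      by (rule split_disjE)
    then show ?thesis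
      by (metis Un_singleton_iff)
  qed
  then have "t = {v\<in>t. P {v}} \<union> {v\<in>t. Q {v}}"
    by auto
  moreover have "P {v\<in>t. P {v}}" "Q {v\<in>t. Q {v}}"
    by (subst is_flat_iff[OF P] is_flat_iff[OF Q], simp)+
  ultimately show "split_disj P Q t"
    by (rule split_disjI)
qed

lemma split_disj_conj:
  assumes R: "is_flat R"
    and "downward_closed P" "split_disj P R t"
    and "downward_closed Q" "split_disj Q R t"
  shows "split_disj (\<lambda>s. P s \<and> Q s) R t"
proof -
  \<comment> \<open>By flatness the points of \<open>t\<close> where \<open>R\<close> holds form a common \<open>R\<close>-part for both splits.\<close>
  define w where "w = {v\<in>t. R {v}}"
  have remainder: "P' (t - w)" if "downward_closed P'" "split_disj P' R t" for P'
  proof -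
    obtain s u where "t = s \<union> u" "P' s" "R u"
      using \<open>split_disj P' R t\<close> by (rule split_disjE)
    have "\<forall>v\<in>u. R {v}"
      using \<open>R u\<close> by (subst (asm) is_flat_iff[OF R])
    then have "t - w \<subseteq> s"
      using \<open>t = s \<union> u\<close> unfolding w_def by blast
    then show ?thesis
      by (rule downward_closedD[OF \<open>downward_closed P'\<close> \<open>P' s\<close>])
  qed
  show ?thesis
  proof (rule split_disjI)
    show "t = (t - w) \<union> w"
      unfolding w_def by blast
    show "P (t - w) \<and> Q (t - w)"
      using remainder assms by blast
    show "R w"
      unfolding w_def by (subst is_flat_iff[OF R]) simp
  qed
qed

lemma sat_Disj_split_disj: "sat t (Disj a b) \<longleftrightarrow> split_disj (\<lambda>s. sat s a) (\<lambda>s. sat s b) t"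
  unfolding split_disj_def by auto

lemma sat_empty_team: "sat {} a"
  by (induction a) auto

lemma downward_closed_sat: "downward_closed (\<lambda>t. sat t a)"
proof (induction a)
  case (Disj a b)
  then show ?case
    unfolding sat_Disj_split_disj by (rule downward_closed_split_disj)
qed (auto simp: downward_closed_def)

lemma sat_subset: "sat t a \<Longrightarrow> s \<subseteq> t \<Longrightarrow> sat s a"
  using downward_closed_sat by (rule downward_closedD)

lemma is_flat_sat: "classical a \<Longrightarrow> is_flat (\<lambda>t. sat t a)"
proof (induction a)
  case (Conj a b)
  then show ?case
    by (simp add: is_flat_conj)
next
  case (Disj a b)
  then show ?case
    unfolding sat_Disj_split_disj by (simp add: is_flat_split_disj)
next
  case (Neg a)
  show ?case by (simp add: is_flat_def)
qed (simp_all add: is_flat_def)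

lemma sat_fill_IDisj: "sat t (fill c (IDisj a b)) \<longleftrightarrow> sat t (fill c a) \<or> sat t (fill c b)"
  by (induction c arbitrary: t)
    (auto simp del: sat.simps(5) simp: sat_Disj_split_disj split_disj_disj_left split_disj_disj_right)

text \<open>The unit \<open>\<lambda>s. s = {}\<close> of the fold is the meaning of \<open>Bot\<close>, in accordance with the
  convention that the empty split disjunction is \<open>\<bottom>\<close>.\<close>

definition sat_mdisj :: "(nat \<Rightarrow> bool) set \<Rightarrow> fml multiset \<Rightarrow> bool" where
  "sat_mdisj t M \<longleftrightarrow> fold_mset (\<lambda>a. split_disj (\<lambda>s. sat s a)) (\<lambda>s. s = {}) M t"

lemma sat_mdisj_empty [simp]: "sat_mdisj t {#} \<longleftrightarrow> t = {}"
  by (simp add: sat_mdisj_def)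

lemma sat_mdisj_add_mset:
  "sat_mdisj t (add_mset a M) \<longleftrightarrow> split_disj (\<lambda>s. sat s a) (\<lambda>s. sat_mdisj s M) t"
proof -
  have "comp_fun_commute (\<lambda>a. split_disj (\<lambda>s. sat s a))"
    by unfold_locales (simp add: fun_eq_iff split_disj_left_commute)
  then show ?thesis
    unfolding sat_mdisj_def by (simp add: comp_fun_commute.fold_mset_add_mset)
qed

lemma sat_mdisj_plus:
  "sat_mdisj t (M + N) \<longleftrightarrow> split_disj (\<lambda>s. sat_mdisj s M) (\<lambda>s. sat_mdisj s N) t"
proof (induction M arbitrary: t)
  case empty
  then show ?case
    by (simp add: split_disj_empty_left)
next
  case (add a M)
  then show ?case
    by (simp add: sat_mdisj_add_mset split_disj_assoc)
qed

lemma sat_mdisj_empty_team: "sat_mdisj {} M"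
proof (induction M)
  case (add a M)
  show ?case
    unfolding sat_mdisj_add_mset by (rule split_disjI[where s = "{}" and u = "{}"]) (simp_all add: sat_empty_team add.IH)
qed simp

lemma is_flat_sat_mdisj: "classicals M \<Longrightarrow> is_flat (\<lambda>t. sat_mdisj t M)"
proof (induction M)
  case empty
  show ?case
    by (simp add: is_flat_def)
next
  case (add a M)
  then have "classical a" "classicals M"
    by (simp_all add: classicals_def)
  then show ?case
    unfolding sat_mdisj_add_mset by (intro is_flat_split_disj is_flat_sat add.IH)
qed

lemma sat_mdisj_add_msetI: "sat t a \<Longrightarrow> sat_mdisj t (add_mset a M)"
  unfolding sat_mdisj_add_mset
  by (rule split_disjI[where s = t and u = "{}"]) (simp_all add: sat_mdisj_empty_team)

lemma sat_mdisj_plus_right: "sat_mdisj t M \<Longrightarrow> sat_mdisj t (M + N)"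
  unfolding sat_mdisj_plus
  by (rule split_disjI[where s = t and u = "{}"]) (simp_all add: sat_mdisj_empty_team)

lemma sat_mdisj_add_mset_mono:
  assumes "sat_mdisj t (add_mset a M)" and "\<And>s. sat s a \<Longrightarrow> sat s b"
  shows "sat_mdisj t (add_mset b M)"
  using assms(1) unfolding sat_mdisj_add_mset by (rule split_disj_mono) (simp_all add: assms(2))

lemma sat_mdisj_add_mset_Disj:
  "sat_mdisj t (add_mset (Disj a b) M) \<longleftrightarrow> sat_mdisj t (add_mset a (add_mset b M))"
  by (simp only: sat_mdisj_add_mset sat_Disj_split_disj split_disj_assoc)

lemma sat_mdisj_add_mset_Conj:
  assumes "classicals M" and "sat_mdisj t (add_mset a M)" and "sat_mdisj t (add_mset b M)"
  shows "sat_mdisj t (add_mset (Conj a b) M)"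
proof -
  have "split_disj (\<lambda>s. sat s a \<and> sat s b) (\<lambda>s. sat_mdisj s M) t"
    using assms unfolding sat_mdisj_add_mset
    by (intro split_disj_conj is_flat_sat_mdisj downward_closed_sat)
  then show ?thesis
    unfolding sat_mdisj_add_mset by simp
qed

lemma sat_mdisj_add_mset_Neg:
  assumes "classical a" and "\<And>s. s \<subseteq> t \<Longrightarrow> sat s a \<Longrightarrow> sat_mdisj s M"
  shows "sat_mdisj t (add_mset (Neg a) M)"
  unfolding sat_mdisj_add_mset
proof (rule split_disjI)
  show "t = {v\<in>t. \<not> sat {v} a} \<union> {v\<in>t. sat {v} a}"
    by blast
  show "sat {v\<in>t. \<not> sat {v} a} (Neg a)"
    by simp
  have "sat {v\<in>t. sat {v} a} a"
    by (subst is_flat_iff[OF is_flat_sat[OF assms(1)]]) simp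
  then show "sat_mdisj {v\<in>t. sat {v} a} M"
    by (rule assms(2)[rotated]) blast
qed

lemma sat_mdisj_add_mset_cancel_Neg:
  assumes "sat t (Neg a)" and "sat_mdisj t (add_mset a M)"
  shows "sat_mdisj t M"
proof -
  obtain s u where "t = s \<union> u" "sat s a" "sat_mdisj u M"
    using assms(2) unfolding sat_mdisj_add_mset by (rule split_disjE)
  have "sat {v} a" "\<not> sat {v} a" if "v \<in> s" for v
    using sat_subset[OF \<open>sat s a\<close>, of "{v}"] assms(1) \<open>t = s \<union> u\<close> that by auto
  then have "s = {}"
    by blast
  then show ?thesis
    using \<open>t = s \<union> u\<close> \<open>sat_mdisj u M\<close> by simp
qed

lemma sat_mdisj_Disj_elim:
  assumes "classicals M" and "sat t (Disj a b)"
    and "\<And>s. s \<subseteq> t \<Longrightarrow> sat s a \<Longrightarrow> sat_mdisj s M"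
    and "\<And>u. u \<subseteq> t \<Longrightarrow> sat u b \<Longrightarrow> sat_mdisj u M"
  shows "sat_mdisj t M"
proof -
  obtain s u where "t = s \<union> u" "sat s a" "sat u b"
    using assms(2) unfolding sat_Disj_split_disj by (rule split_disjE)
  then have "sat_mdisj s M" "sat_mdisj u M"
    using assms(3,4) by blast+
  then show ?thesis
    using \<open>t = s \<union> u\<close> is_flat_Un[OF is_flat_sat_mdisj[OF assms(1)]] by simp
qed

lemma sat_mdisj_cut:
  assumes "sat_mdisj t (add_mset a M)" and "\<And>s. s \<subseteq> t \<Longrightarrow> sat s a \<Longrightarrow> sat_mdisj s N"
  shows "sat_mdisj t (M + N)"
proof -
  obtain s u where "t = s \<union> u" "sat s a" "sat_mdisj u M"
    using assms(1) unfolding sat_mdisj_add_mset by (rule split_disjE)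
  then have "sat_mdisj s N" and "t = u \<union> s"
    using assms(2) by blast+
  then show ?thesis
    unfolding sat_mdisj_plus using \<open>sat_mdisj u M\<close> by (intro split_disjI)
qed

lemma sat_bigdisj_list: "sat t (bigdisj_list xs) \<longleftrightarrow> sat_mdisj t (mset xs)"
proof (induction xs arbitrary: t rule: bigdisj_list.induct)
  case (2 a)
  show ?case
    by (simp add: sat_mdisj_add_mset split_disj_def)
next
  case (3 a b xs)
  then show ?case
    by (simp del: sat.simps(5) add: sat_Disj_split_disj sat_mdisj_add_mset)
qed simp

lemma sat_bigdisj: "sat t (bigdisj M) \<longleftrightarrow> sat_mdisj t M"
proof -
  have "mset (SOME xs. mset xs = M) = M"
    by (rule someI_ex) (rule ex_mset)
  then show ?thesis
    unfolding bigdisj_def by (simp add: sat_bigdisj_list)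
qed

lemma sat_all_subset: "\<forall>\<gamma>\<in>#\<Gamma>. sat t \<gamma> \<Longrightarrow> s \<subseteq> t \<Longrightarrow> \<forall>\<gamma>\<in>#\<Gamma>. sat s \<gamma>"
  using sat_subset by blast

lemma derivable_sound: "derivable \<Gamma> \<Delta> \<Longrightarrow> \<forall>\<gamma>\<in>#\<Gamma>. sat t \<gamma> \<Longrightarrow> sat_mdisj t \<Delta>"
proof (induction \<Gamma> \<Delta> arbitrary: t rule: derivable.induct)
  case (Ax \<Gamma> \<Delta> p t)
  then have "sat t (Var p)"
    by auto
  then show ?case
    by (rule sat_mdisj_add_msetI)
next
  case (AxBot \<Gamma> \<Delta> t)
  then show ?case
    by (simp add: sat_mdisj_empty_team)
next
  case (LNeg a \<Gamma> \<Delta> t)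
  then have "sat t (Neg a)" "\<forall>\<gamma>\<in>#\<Gamma>. sat t \<gamma>"
    by simp_all
  then show ?case
    by (rule sat_mdisj_add_mset_cancel_Neg[OF _ LNeg.IH])
next
  case (RNeg a \<Gamma> \<Delta> t)
  show ?case
  proof (rule sat_mdisj_add_mset_Neg[OF \<open>classical a\<close>])
    show "sat_mdisj s \<Delta>" if "s \<subseteq> t" "sat s a" for s
      using RNeg.IH sat_all_subset[OF RNeg.prems] that by simp
  qed
next
  case (LConj \<phi> \<psi> \<Gamma> \<Delta> t)
  then show ?case
    by simp
next
  case (RConj \<Lambda> \<Delta> \<Gamma> \<phi> \<psi> t)
  then have "sat_mdisj t (add_mset (Conj \<phi> \<psi>) \<Lambda>)"
    by (simp add: sat_mdisj_add_mset_Conj)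
  then have "sat_mdisj t (add_mset (Conj \<phi> \<psi>) \<Lambda> + \<Delta>)"
    by (rule sat_mdisj_plus_right)
  then show ?case
    by simp
next
  case (LDisj \<Lambda> \<Delta> \<phi> \<Gamma> \<psi> t)
  then have \<Gamma>: "\<forall>\<gamma>\<in>#\<Gamma>. sat t \<gamma>"
    by simp
  have "sat_mdisj t \<Lambda>"
  proof (rule sat_mdisj_Disj_elim)
    show "classicals \<Lambda>" "sat t (Disj \<phi> \<psi>)"
      using LDisj by simp_all
    show "sat_mdisj s \<Lambda>" if "s \<subseteq> t" "sat s \<phi>" for s
      using LDisj.IH(1) sat_all_subset[OF \<Gamma>] that by simp
    show "sat_mdisj u \<Lambda>" if "u \<subseteq> t" "sat u \<psi>" for u
      using LDisj.IH(2) sat_all_subset[OF \<Gamma>] that by simp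
  qed
  then show ?case
    by (rule sat_mdisj_plus_right)
next
  case (RDisj \<Gamma> \<phi> \<psi> \<Delta> t)
  then show ?case
    by (simp add: sat_mdisj_add_mset_Disj)
next
  case (LIDisj c \<phi>L \<Gamma> \<Delta> \<phi>R t)
  then have "sat t (fill c \<phi>L) \<or> sat t (fill c \<phi>R)" "\<forall>\<gamma>\<in>#\<Gamma>. sat t \<gamma>"
    by (simp_all add: sat_fill_IDisj)
  then show ?case
    using LIDisj.IH by auto
next
  case (RIDisjL \<phi>R \<Gamma> c \<phi>L \<Delta> t)
  then have "sat_mdisj t (add_mset (fill c \<phi>L) \<Delta>)"
    by simp
  then show ?case
    by (rule sat_mdisj_add_mset_mono) (simp add: sat_fill_IDisj)
next
  case (RIDisjR \<phi>L \<Gamma> c \<phi>R \<Delta> t)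
  then have "sat_mdisj t (add_mset (fill c \<phi>R) \<Delta>)"
    by simp
  then show ?case
    by (rule sat_mdisj_add_mset_mono) (simp add: sat_fill_IDisj)
next
  case (Cut \<Gamma> \<phi> \<Delta> \<Pi> \<Sigma> t)
  then have \<Pi>: "\<forall>\<gamma>\<in>#\<Pi>. sat t \<gamma>"
    by simp
  show ?case
  proof (rule sat_mdisj_cut)
    show "sat_mdisj t (add_mset \<phi> \<Delta>)"
      using Cut by simp
    show "sat_mdisj s \<Sigma>" if "s \<subseteq> t" "sat s \<phi>" for s
      using Cut.IH(2) sat_all_subset[OF \<Pi>] that by simp
  qed
qed

theorem theorem3p2:
  fixes \<Gamma> \<Delta> :: "fml multiset"
  assumes "wfs \<Gamma>" and "wfs \<Delta>"
    and "derivable \<Gamma> \<Delta>"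
  shows "entails \<Gamma> (bigdisj \<Delta>)"
  \<comment> \<open>Neither the domain \<open>X\<close> nor well-formedness matters: \<open>sat\<close> ignores both.\<close>
  unfolding entails_def sat_bigdisj using derivable_sound[OF assms(3)] by blast

end
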